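(* Let $\mathcal{O}\subset\mathbb{R}^n$ be open and let $V_1,\dots,V_K:\mathcal{O}\to\mathbb{R}$ be proper piecewise $C^1$ functions on $\mathcal{O}$. Then the functions $V_M,V_m:\mathcal{O}\to\mathbb{R}$ defined by $V_M(x):=\max_{i=1,\dots,K}V_i(x)$ and $V_m(x):=\min_{i=1,\dots,K}V_i(x)$ are proper piecewise $C^1$ on $\mathcal{O}$.
   Context: For open $\mathcal{O}\subset\mathbb{R}^n$, a continuous $V:\mathcal{O}\to\mathbb{R}$ is proper piecewise $C^1$ on $\mathcal{O}$ if there exist $\mathcal{I}=\{1,\dots,N\}$, closed sets $\mathcal{X}_i\subset\mathbb{R}^n$, open sets $\mathcal{O}_i\subset\mathbb{R}^n$ and continuously differentiable $W_i:\mathcal{O}_i\to\mathbb{R}$ ($i\in\mathcal{I}$) such that: (A) $\mathcal{X}_i\cap\mathcal{O}\subset\mathcal{O}_i$ for all $i$; (B) $\overline{\mathrm{int}(\mathcal{X}_i)}=\mathcal{X}_i$ for all $i$; (C) $\mathcal{O}\subset\bigcup_{i\in\mathcal{I}}\mathcal{X}_i$; (D) $V(x)=W_i(x)$ whenever $x\in\mathcal{X}_i\cap\mathcal{O}$. *)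

theory Defs
  imports "HOL-Analysis.Analysis"
begin

definition C1_on :: "('a::euclidean_space) set \<Rightarrow> ('a \<Rightarrow> real) \<Rightarrow> bool" where
  "C1_on S W \<longleftrightarrow> (\<exists>W'. (\<forall>x\<in>S. (W has_derivative blinfun_apply (W' x)) (at x))
                          \<and> continuous_on S W')"

definition proper_piecewise_C1 :: "('a::euclidean_space) set \<Rightarrow> ('a \<Rightarrow> real) \<Rightarrow> bool" where
  "proper_piecewise_C1 U V \<longleftrightarrow> continuous_on U V \<and>
    (\<exists>(N::nat) (X::nat \<Rightarrow> 'a set) (Os::nat \<Rightarrow> 'a set) (W::nat \<Rightarrow> 'a \<Rightarrow> real).
       (\<forall>i\<in>{1..N}. closed (X i) \<and> open (Os i) \<and> C1_on (Os i) (W i)) \<and>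
       (\<forall>i\<in>{1..N}. X i \<inter> U \<subseteq> Os i) \<and>
       (\<forall>i\<in>{1..N}. closure (interior (X i)) = X i) \<and>
       U \<subseteq> (\<Union>i\<in>{1..N}. X i) \<and>
       (\<forall>i\<in>{1..N}. \<forall>x\<in>X i \<inter> U. V x = W i x))"

end

theory Submission
  imports Defs
begin

text \<open>On \<open>U\<close> the maximum (or minimum) \<open>F\<close> is a continuous function that agrees at every
point with one of the \<open>V\<^sub>k\<close>. Intersecting the pieces \<open>X\<^sub>k\<^sub>i\<close> of \<open>V\<^sub>k\<close> with the relatively closed set
\<open>{F = V\<^sub>k}\<close> gives finitely many relatively closed sets covering the open set \<open>U\<close>, on each of which
\<open>F = W\<^sub>k\<^sub>i\<close>. They need not be regular closed, but replacing each by the closure of its interior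
keeps a cover of \<open>U\<close>: a nonempty open set covered by finitely many closed sets meets the interior
of one of them.\<close>

definition C1_pieces ::
    "'a::euclidean_space set \<Rightarrow> ('a \<Rightarrow> real) \<Rightarrow> 'j set \<Rightarrow> ('j \<Rightarrow> 'a set) \<Rightarrow> ('j \<Rightarrow> 'a set)
      \<Rightarrow> ('j \<Rightarrow> 'a \<Rightarrow> real) \<Rightarrow> bool" where
  "C1_pieces U V J X Os W \<longleftrightarrow>
     (\<forall>j\<in>J. closed (X j) \<and> open (Os j) \<and> C1_on (Os j) (W j)) \<and>
     (\<forall>j\<in>J. X j \<inter> U \<subseteq> Os j) \<and>
     (\<forall>j\<in>J. closure (interior (X j)) = X j) \<and>
     U \<subseteq> (\<Union>j\<in>J. X j) \<and>
     (\<forall>j\<in>J. \<forall>x\<in>X j \<inter> U. V x = W j x)"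

lemma proper_piecewise_C1_iff:
  "proper_piecewise_C1 U V \<longleftrightarrow> continuous_on U V \<and> (\<exists>N X Os W. C1_pieces U V {1..N::nat} X Os W)"
  unfolding proper_piecewise_C1_def C1_pieces_def by (rule refl)

lemma C1_pieces_imp_proper_piecewise_C1:
  assumes "continuous_on U V" "finite J" and pieces: "C1_pieces U V J X Os W"
  shows "proper_piecewise_C1 U V"
proof -
  obtain h where "bij_betw h {1..card J} J"
    using assms(2) ex_bij_betw_nat_finite_1 by blast
  then have "C1_pieces U V (h ` {1..card J}) X Os W"
    using pieces by (simp add: bij_betw_def)
  then have "C1_pieces U V {1..card J} (X \<circ> h) (Os \<circ> h) (W \<circ> h)"
    unfolding C1_pieces_def by auto
  with assms(1) show ?thesis
    unfolding proper_piecewise_C1_iff by blast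
qed

lemma closure_interior_idemp:
  "closure (interior (closure (interior S))) = closure (interior S)"
proof
  show "closure (interior (closure (interior S))) \<subseteq> closure (interior S)"
    by (meson closed_closure closure_minimal interior_subset)
  show "closure (interior S) \<subseteq> closure (interior (closure (interior S)))"
    by (simp add: closure_mono closure_subset interior_maximal)
qed

lemma open_subset_finite_Union_closed_meets_interior:
  fixes T :: "'j \<Rightarrow> 'a::topological_space set"
  assumes "finite J" "\<And>j. j \<in> J \<Longrightarrow> closed (T j)"
    and "open B" "B \<noteq> {}" "B \<subseteq> (\<Union>j\<in>J. T j)"
  shows "\<exists>j\<in>J. interior (T j) \<inter> B \<noteq> {}"
  using assms
proof (induction J arbitrary: B rule: finite_induct)
  case empty
  then show ?case by simp
next
  case (insert a J)
  show ?case
  proof (cases "B \<subseteq> T a")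
    case True
    then have "B \<subseteq> interior (T a)"
      using insert.prems by (simp add: interior_maximal)
    then show ?thesis
      using insert.prems by auto
  next
    case False
    have "open (B - T a)"
      using insert.prems by (simp add: open_Diff)
    moreover have "B - T a \<subseteq> (\<Union>j\<in>J. T j)"
      using insert.prems by auto
    ultimately obtain j where "j \<in> J" "interior (T j) \<inter> (B - T a) \<noteq> {}"
      using insert.IH[of "B - T a"] insert.prems False by auto
    then show ?thesis by auto
  qed
qed

lemma closure_Int_subset_closedin:
  assumes "closedin (top_of_set U) A" "B \<subseteq> A"
  shows "closure B \<inter> U \<subseteq> A"
proof -
  obtain T where "closed T" "A = U \<inter> T"
    using assms(1) closedin_closed by blast
  with assms(2) show ?thesis
    by (metis closure_minimal inf.cobounded2 inf_commute inf_mono order_refl subset_trans)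
qed

lemma open_subset_Union_closure_interior:
  fixes S :: "'j \<Rightarrow> 'a::topological_space set"
  assumes "open U" "finite J" "\<And>j. j \<in> J \<Longrightarrow> closedin (top_of_set U) (S j)"
    and cover: "U \<subseteq> (\<Union>j\<in>J. S j)"
  shows "U \<subseteq> (\<Union>j\<in>J. closure (interior (S j)))"
proof (rule ccontr)
  define D where "D = U - (\<Union>j\<in>J. closure (interior (S j)))"
  assume uncovered: "\<not> ?thesis"
  have "open D"
    unfolding D_def using assms(1,2) by (simp add: open_Diff closed_UN)
  moreover have "D \<noteq> {}"
    unfolding D_def using uncovered by simp
  moreover have "D \<subseteq> (\<Union>j\<in>J. closure (S j))"
  proof -
    have "(\<Union>j\<in>J. S j) \<subseteq> (\<Union>j\<in>J. closure (S j))"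
      by (intro UN_mono closure_subset order_refl)
    then show ?thesis
      using cover unfolding D_def by (meson Diff_subset subset_trans)
  qed
  ultimately have "\<exists>j\<in>J. interior (closure (S j)) \<inter> D \<noteq> {}"
    by (rule open_subset_finite_Union_closed_meets_interior[OF assms(2) closed_closure])
  then obtain j where j: "j \<in> J" "interior (closure (S j)) \<inter> D \<noteq> {}" ..
  have "interior (closure (S j)) \<inter> D \<subseteq> closure (S j) \<inter> U"
    unfolding D_def using interior_subset by blast
  also have "\<dots> \<subseteq> S j"
    using closure_Int_subset_closedin[OF assms(3)[OF j(1)] order_refl] .
  finally have "interior (closure (S j)) \<inter> D \<subseteq> interior (S j)"
    using \<open>open D\<close> by (simp add: interior_maximal open_Int)
  moreover have "interior (S j) \<inter> D = {}"
    unfolding D_def using j(1) closure_subset by fastforce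
  ultimately show False
    using j(2) by blast
qed

lemma closedin_continuous_on_eq:
  fixes f g :: "'a::topological_space \<Rightarrow> 'b::real_normed_vector"
  assumes "continuous_on U f" "continuous_on U g"
  shows "closedin (top_of_set U) {x \<in> U. f x = g x}"
proof -
  have "closedin (top_of_set U) {x \<in> U. f x - g x = 0}"
    using assms by (intro continuous_closedin_preimage_constant continuous_intros)
  then show ?thesis
    by simp
qed

lemma closure_interior_Int_piece:
  assumes "closed X" "X \<inter> U \<subseteq> Os" "\<And>x. x \<in> X \<inter> U \<Longrightarrow> V x = W x"
    and "closedin (top_of_set U) A" "\<And>x. x \<in> A \<Longrightarrow> F x = V x"
  defines "Z \<equiv> closure (interior (X \<inter> A))"
  shows "closed Z" "closure (interior Z) = Z" "Z \<inter> U \<subseteq> Os" "\<And>x. x \<in> Z \<inter> U \<Longrightarrow> F x = W x"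
proof -
  have "Z \<subseteq> X"
    unfolding Z_def using assms(1) by (meson closure_minimal inf.boundedE interior_subset)
  then show "Z \<inter> U \<subseteq> Os"
    using assms(2) by blast
  have "Z \<inter> U \<subseteq> A"
    unfolding Z_def using assms(4) by (meson closure_Int_subset_closedin inf.boundedE interior_subset)
  show "F x = W x" if "x \<in> Z \<inter> U" for x
  proof -
    have "x \<in> A" "x \<in> X \<inter> U"
      using that \<open>Z \<subseteq> X\<close> \<open>Z \<inter> U \<subseteq> A\<close> by auto
    then show ?thesis
      by (simp add: assms(3,5))
  qed
  show "closed Z" "closure (interior Z) = Z"
    unfolding Z_def by (simp_all only: closed_closure closure_interior_idemp)
qed

lemma C1_pieces_continuous_selection:
  fixes V :: "'k \<Rightarrow> 'a::euclidean_space \<Rightarrow> real"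
  assumes "open U" "finite I" "\<And>k. k \<in> I \<Longrightarrow> finite (J k)"
    and pieces: "\<And>k. k \<in> I \<Longrightarrow> C1_pieces U (V k) (J k) (X k) (Os k) (W k)"
    and contV: "\<And>k. k \<in> I \<Longrightarrow> continuous_on U (V k)"
    and contF: "continuous_on U F"
    and select: "\<And>x. x \<in> U \<Longrightarrow> \<exists>k\<in>I. F x = V k x"
  defines "A k \<equiv> {x \<in> U. F x = V k x}"
  defines "Z \<equiv> \<lambda>(k, i). closure (interior (X k i \<inter> A k))"
  shows "C1_pieces U F (Sigma I J) Z (\<lambda>(k, i). Os k i) (\<lambda>(k, i). W k i)"
proof -
  have closedin_A: "closedin (top_of_set U) (A k)" if "k \<in> I" for k
    unfolding A_def using contF contV[OF that] by (rule closedin_continuous_on_eq)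
  define S where "S = (\<lambda>(k, i). X k i \<inter> A k)"
  have "U \<subseteq> (\<Union>j\<in>Sigma I J. closure (interior (S j)))"
    unfolding S_def
  proof (rule open_subset_Union_closure_interior[OF assms(1)])
    show "finite (Sigma I J)"
      using assms(2,3) by simp
    show "closedin (top_of_set U) (case j of (k, i) \<Rightarrow> X k i \<inter> A k)" if "j \<in> Sigma I J" for j
    proof -
      obtain k i where j: "j = (k, i)" "k \<in> I" "i \<in> J k"
        using \<open>j \<in> Sigma I J\<close> by blast
      then have "closedin (top_of_set U) (U \<inter> X k i)"
        using pieces[of k] unfolding C1_pieces_def by (simp add: closedin_closed_Int)
      moreover have "X k i \<inter> A k = (U \<inter> X k i) \<inter> A k"
        unfolding A_def by auto
      ultimately show ?thesis
        using closedin_A[OF j(2)] j(1) by (simp add: closedin_Int)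
    qed
    show "U \<subseteq> (\<Union>j\<in>Sigma I J. case j of (k, i) \<Rightarrow> X k i \<inter> A k)"
    proof
      fix x assume "x \<in> U"
      then obtain k where k: "k \<in> I" "F x = V k x"
        using select by blast
      moreover obtain i where "i \<in> J k" "x \<in> X k i"
        using pieces[OF k(1)] \<open>x \<in> U\<close> unfolding C1_pieces_def by blast
      ultimately show "x \<in> (\<Union>j\<in>Sigma I J. case j of (k, i) \<Rightarrow> X k i \<inter> A k)"
        using \<open>x \<in> U\<close> unfolding A_def by force
    qed
  qed
  moreover have "closed (Z (k, i)) \<and> closure (interior (Z (k, i))) = Z (k, i) \<and>
      Z (k, i) \<inter> U \<subseteq> Os k i \<and> (\<forall>x\<in>Z (k, i) \<inter> U. F x = W k i x)" if "k \<in> I" "i \<in> J k" for k i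
  proof -
    have X: "closed (X k i)" "X k i \<inter> U \<subseteq> Os k i" "\<And>x. x \<in> X k i \<inter> U \<Longrightarrow> V k x = W k i x"
      using pieces[OF that(1)] that(2) unfolding C1_pieces_def by auto
    have "\<And>x. x \<in> A k \<Longrightarrow> F x = V k x"
      by (simp add: A_def)
    note piece = closure_interior_Int_piece[OF X closedin_A[OF that(1)] this]
    show ?thesis
      unfolding Z_def prod.case by (intro conjI ballI piece)
  qed
  moreover have "Z = (\<lambda>j. closure (interior (S j)))"
    unfolding Z_def S_def by auto
  ultimately show ?thesis
    using pieces unfolding C1_pieces_def by auto
qed

lemma proper_piecewise_C1_continuous_selection:
  fixes V :: "'k \<Rightarrow> 'a::euclidean_space \<Rightarrow> real"
  assumes "open U" "finite I"
    and piecewise: "\<And>k. k \<in> I \<Longrightarrow> proper_piecewise_C1 U (V k)"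
    and contF: "continuous_on U F"
    and select: "\<And>x. x \<in> U \<Longrightarrow> \<exists>k\<in>I. F x = V k x"
  shows "proper_piecewise_C1 U F"
proof -
  have contV: "continuous_on U (V k)"
    and "\<exists>N X Os W. C1_pieces U (V k) {1..N::nat} X Os W" if "k \<in> I" for k
    using piecewise[OF that] by (simp_all only: proper_piecewise_C1_iff)
  then obtain N :: "'k \<Rightarrow> nat" and X Os W
    where "\<And>k. k \<in> I \<Longrightarrow> C1_pieces U (V k) {1..N k} (X k) (Os k) (W k)"
    by metis
  from C1_pieces_continuous_selection[OF assms(1,2) _ this contV contF select]
  show ?thesis
    using contF assms(2) by (intro C1_pieces_imp_proper_piecewise_C1) auto
qed

lemma continuous_on_Max:
  fixes f :: "'i \<Rightarrow> 'a::topological_space \<Rightarrow> 'b::linorder_topology"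
  assumes "finite I" "I \<noteq> {}" "\<And>i. i \<in> I \<Longrightarrow> continuous_on U (f i)"
  shows "continuous_on U (\<lambda>x. Max ((\<lambda>i. f i x) ` I))"
  using assms by (induction I rule: finite_ne_induct) (simp_all add: continuous_on_max)

lemma continuous_on_Min:
  fixes f :: "'i \<Rightarrow> 'a::topological_space \<Rightarrow> 'b::linorder_topology"
  assumes "finite I" "I \<noteq> {}" "\<And>i. i \<in> I \<Longrightarrow> continuous_on U (f i)"
  shows "continuous_on U (\<lambda>x. Min ((\<lambda>i. f i x) ` I))"
  using assms by (induction I rule: finite_ne_induct) (simp_all add: continuous_on_min)

theorem proposition3:
  fixes U :: "(real ^ 'n) set" and V :: "nat \<Rightarrow> real ^ 'n \<Rightarrow> real" and K :: nat
  assumes "open U" and "K \<ge> 1"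
    and "\<And>i. i \<in> {1..K} \<Longrightarrow> proper_piecewise_C1 U (V i)"
  shows "proper_piecewise_C1 U (\<lambda>x. Max ((\<lambda>i. V i x) ` {1..K})) \<and>
         proper_piecewise_C1 U (\<lambda>x. Min ((\<lambda>i. V i x) ` {1..K}))"
proof -
  have nonempty: "{1..K} \<noteq> {}"
    using assms(2) by simp
  have contV: "\<And>i. i \<in> {1..K} \<Longrightarrow> continuous_on U (V i)"
    using assms(3) proper_piecewise_C1_iff by blast
  have "Max ((\<lambda>i. V i x) ` {1..K}) \<in> (\<lambda>i. V i x) ` {1..K}"
    and "Min ((\<lambda>i. V i x) ` {1..K}) \<in> (\<lambda>i. V i x) ` {1..K}" for x
    using nonempty by (simp_all add: Max_in Min_in)
  then have max: "\<exists>k\<in>{1..K}. Max ((\<lambda>i. V i x) ` {1..K}) = V k x"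
    and min: "\<exists>k\<in>{1..K}. Min ((\<lambda>i. V i x) ` {1..K}) = V k x" for x
    by (auto simp: image_iff)
  have "continuous_on U (\<lambda>x. Max ((\<lambda>i. V i x) ` {1..K}))"
    and "continuous_on U (\<lambda>x. Min ((\<lambda>i. V i x) ` {1..K}))"
    by (rule continuous_on_Max continuous_on_Min; use nonempty contV in simp)+
  with max min show ?thesis
    using proper_piecewise_C1_continuous_selection[where V = V, OF assms(1) finite_atLeastAtMost assms(3)]
    by blast
qed

end
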